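(* Let $d\geqslant2$ be an integer, let $V$ be a finite set with $|V|\geqslant d$, let $G$ be a $d$-uniform hypergraph on $V$, let $\boldsymbol{X}_G=\langle X^G_s:s\in\binom{\mathbb{N}}{d}\rangle$ be the random array associated with $G$, and for every integer $n\geqslant 2d$ let $\boldsymbol{X}_{G,n}=\langle X^G_s:s\in\binom{[n]}{d}\rangle$. Let $\varrho,\vartheta>0$. Then: (i) if $G$ is $\varrho$-box uniform, then for every integer $n\geqslant 2d$ the random array $\boldsymbol{X}_{G,n}$ is $(2^d\varrho,\{1\})$-box independent; (ii) conversely, if $\boldsymbol{X}_{G,n}$ is $(\vartheta,\{1\})$-box independent for some (equivalently, every) integer $n\geqslant 2d$, then $G$ is $(12\,\vartheta^{1/8^d})$-box uniform.
   Context: Let $\mathcal{G}=\{(v_1,\dots,v_d)\in V^d:\{v_1,\dots,v_d\}\in G\}$. Let $(\xi_i)_{i\geqslant1}$ be i.i.d. random variables uniformly distributed on $V$; the associated random array is defined by $X^G_s=\mathbf{1}_{\mathcal{G}}(\xi_{i_1},\dots,\xi_{i_d})$ for $s=\{i_1<\dots<i_d\}$. Viewing $V$ with the uniform probability measure and $V^{2d}$ with the product measure $\boldsymbol{\mu}$, the box norm of $f\colon V^d\to\mathbb{R}$ is $\|f\|_\square=\big(\int\prod_{\boldsymbol{\epsilon}\in\{0,1\}^d}f(\boldsymbol{\omega}_{\boldsymbol{\epsilon}})\,d\boldsymbol{\mu}(\boldsymbol{\omega})\big)^{1/2^d}$, where for $\boldsymbol{\omega}=(\omega_1^0,\omega_1^1,\dots,\omega_d^0,\omega_d^1)$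 and $\boldsymbol{\epsilon}=(\epsilon_1,\dots,\epsilon_d)$, $\boldsymbol{\omega}_{\boldsymbol{\epsilon}}=(\omega_1^{\epsilon_1},\dots,\omega_d^{\epsilon_d})$. $G$ is $\varrho$-box uniform if $\|\mathbf{1}_{\mathcal{G}}-\mathbb{E}[\mathbf{1}_{\mathcal{G}}]\|_\square\leqslant\varrho$. A $d$-dimensional box of $[n]$ is $\{s\in\binom{[n]}{d}:|s\cap H_i|=1\ \forall i\in[d]\}$ for 2-element sets $H_1,\dots,H_d\subseteq[n]$ with $\max(H_i)<\min(H_{i+1})$. A $\{0,1\}$-valued random array $\boldsymbol{X}$ on $[n]$ is $(\vartheta,\{1\})$-box independent if for every $d$-dimensional box $B$ of $[n]$, $\mathbb{P}(\bigcap_{s\in B}[X_s=1])\leqslant\prod_{s\in B}\mathbb{P}([X_s=1])+\vartheta$. *)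

theory Defs
  imports "HOL-Probability.Probability"
begin

definition tuples :: "nat \<Rightarrow> 'a set \<Rightarrow> (nat \<Rightarrow> 'a) set" where
  "tuples d V = {..<d} \<rightarrow>\<^sub>E V"

definition uniform_hypergraph :: "nat \<Rightarrow> 'a set \<Rightarrow> 'a set set \<Rightarrow> bool" where
  "uniform_hypergraph d V G \<longleftrightarrow> (\<forall>e\<in>G. e \<subseteq> V \<and> card e = d)"

definition curlyG :: "nat \<Rightarrow> 'a set \<Rightarrow> 'a set set \<Rightarrow> (nat \<Rightarrow> 'a) set" where
  "curlyG d V G = {v \<in> tuples d V. v ` {..<d} \<in> G}"

definition avg :: "nat \<Rightarrow> 'a set \<Rightarrow> ((nat \<Rightarrow> 'a) \<Rightarrow> real) \<Rightarrow> real" where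
  "avg d V f = (\<Sum>v\<in>tuples d V. f v) / real (card V) ^ d"

text \<open>Box norm of f : V^d -> R, with omega in V^(2d) encoded as nat => bool => 'a.\<close>
definition box_norm :: "nat \<Rightarrow> 'a set \<Rightarrow> ((nat \<Rightarrow> 'a) \<Rightarrow> real) \<Rightarrow> real" where
  "box_norm d V f = root (2 ^ d)
     ((\<Sum>\<omega> \<in> {..<d} \<rightarrow>\<^sub>E ((UNIV :: bool set) \<rightarrow>\<^sub>E V).
        \<Prod>\<epsilon> \<in> {..<d} \<rightarrow>\<^sub>E (UNIV :: bool set). f (\<lambda>i\<in>{..<d}. \<omega> i (\<epsilon> i)))
      / real (card V) ^ (2 * d))"

definition box_uniform :: "nat \<Rightarrow> 'a set \<Rightarrow> 'a set set \<Rightarrow> real \<Rightarrow> bool" where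
  "box_uniform d V G \<rho> \<longleftrightarrow>
     box_norm d V (\<lambda>v. indicator (curlyG d V G) v - avg d V (indicator (curlyG d V G))) \<le> \<rho>"

text \<open>The random array: X_s = 1_curlyG(xi_{i_1},...,xi_{i_d}) for s = {i_1 < ... < i_d}.\<close>
definition Xarr :: "nat \<Rightarrow> 'a set \<Rightarrow> 'a set set \<Rightarrow> (nat \<Rightarrow> 'a) \<Rightarrow> nat set \<Rightarrow> real" where
  "Xarr d V G \<xi> s = indicator (curlyG d V G) (\<lambda>j\<in>{..<d}. \<xi> (sorted_list_of_set s ! j))"

definition prob_xi :: "nat \<Rightarrow> 'a set \<Rightarrow> ((nat \<Rightarrow> 'a) \<Rightarrow> bool) \<Rightarrow> real" where
  "prob_xi n V P = measure_pmf.prob (pmf_of_set ({1..n} \<rightarrow>\<^sub>E V)) {\<xi>. P \<xi>}"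

definition box_family :: "nat \<Rightarrow> nat \<Rightarrow> (nat \<Rightarrow> nat set) \<Rightarrow> bool" where
  "box_family d n H \<longleftrightarrow> (\<forall>i<d. H i \<subseteq> {1..n} \<and> card (H i) = 2) \<and>
     (\<forall>i. Suc i < d \<longrightarrow> Max (H i) < Min (H (Suc i)))"

definition box :: "nat \<Rightarrow> nat \<Rightarrow> (nat \<Rightarrow> nat set) \<Rightarrow> nat set set" where
  "box d n H = {s. s \<subseteq> {1..n} \<and> card s = d \<and> (\<forall>i<d. card (s \<inter> H i) = 1)}"

definition box_independent :: "nat \<Rightarrow> 'a set \<Rightarrow> 'a set set \<Rightarrow> nat \<Rightarrow> real \<Rightarrow> bool" where
  "box_independent d V G n \<theta> \<longleftrightarrow>
     (\<forall>H. box_family d n H \<longrightarrow>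
        prob_xi n V (\<lambda>\<xi>. \<forall>s\<in>box d n H. Xarr d V G \<xi> s = 1)
          \<le> (\<Prod>s\<in>box d n H. prob_xi n V (\<lambda>\<xi>. Xarr d V G \<xi> s = 1)) + \<theta>)"

end

theory Submission
  imports Defs
begin

(*
  Fix a box of [n]: its 2^d members are indexed by the cube {0,1}^d, and the values of xi at the
  2d elements of the box form a uniformly distributed point omega of V^(2d), whatever n is. The
  event that X_s = 1 for every s in the box is the event that all vertices omega_epsilon lie in
  curly-G, so its probability is ||1_G||^(2^d), while every single X_s = 1 has probability equal
  to the density delta of 1_G. Hence box independence with error theta says exactly
  ||1_G||^(2^d) <= delta^(2^d) + theta.

  The Gowers-Cauchy-Schwarz inequality, obtained by applying Cauchy-Schwarz once per coordinate,
  gives |E f| <= ||f|| and the triangle inequality for the box norm. Part (i) follows from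
  ||1_G|| <= delta + ||1_G - delta||. For part (ii), phi(t) = ||delta + t (1_G - delta)||^(2^d)
  is a polynomial of degree N = 2^d with leading coefficient ||1_G - delta||^N, and by these two
  inequalities delta^N <= phi(t) <= ||1_G||^N <= delta^N + theta on [0,1]. Its N-th finite
  difference with step 1/N equals N!/N^N times the leading coefficient and is at most
  2^N theta, so that ||1_G - delta||^N <= 6^N theta.
*)

section \<open>Gowers sums and the Gowers--Cauchy--Schwarz inequality\<close>

definition Omega :: "nat \<Rightarrow> 'a set \<Rightarrow> (nat \<Rightarrow> bool \<Rightarrow> 'a) set" where
  "Omega d V = {..<d} \<rightarrow>\<^sub>E ((UNIV :: bool set) \<rightarrow>\<^sub>E V)"

definition cube :: "nat \<Rightarrow> (nat \<Rightarrow> bool) set" where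
  "cube d = {..<d} \<rightarrow>\<^sub>E (UNIV :: bool set)"

definition vertex :: "nat \<Rightarrow> (nat \<Rightarrow> bool \<Rightarrow> 'a) \<Rightarrow> (nat \<Rightarrow> bool) \<Rightarrow> nat \<Rightarrow> 'a" where
  "vertex d w \<epsilon> = (\<lambda>i\<in>{..<d}. w i (\<epsilon> i))"

definition gowers_sum :: "nat \<Rightarrow> 'a set \<Rightarrow> ((nat \<Rightarrow> bool) \<Rightarrow> (nat \<Rightarrow> 'a) \<Rightarrow> real) \<Rightarrow> real" where
  "gowers_sum d V F = (\<Sum>w\<in>Omega d V. \<Prod>\<epsilon>\<in>cube d. F \<epsilon> (vertex d w \<epsilon>))"

lemma finite_Omega: "finite V \<Longrightarrow> finite (Omega d V)"
  unfolding Omega_def by (intro finite_PiE) auto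

lemma finite_cube: "finite (cube d)"
  unfolding cube_def by (intro finite_PiE) auto

lemma card_Omega: "finite V \<Longrightarrow> card (Omega d V) = card V ^ (2 * d)"
  by (simp add: Omega_def card_PiE power_mult)

lemma card_cube: "card (cube d) = 2 ^ d"
  by (simp add: cube_def card_PiE)

lemma card_tuples: "finite V \<Longrightarrow> card (tuples d V) = card V ^ d"
  by (simp add: tuples_def card_PiE)

lemma fun_upd_in_cube: "i < d \<Longrightarrow> \<epsilon> \<in> cube d \<Longrightarrow> \<epsilon>(i := b) \<in> cube d"
  by (auto simp: cube_def PiE_def extensional_def)

lemma gowers_sum_cong:
  "(\<And>\<epsilon>. \<epsilon> \<in> cube d \<Longrightarrow> F \<epsilon> = F' \<epsilon>) \<Longrightarrow> gowers_sum d V F = gowers_sum d V F'"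
  unfolding gowers_sum_def by simp

lemma box_norm_gowers_sum:
  "box_norm d V f = root (2 ^ d) (gowers_sum d V (\<lambda>_. f) / real (card V) ^ (2 * d))"
  unfolding box_norm_def gowers_sum_def Omega_def cube_def vertex_def ..

definition cube_face :: "nat \<Rightarrow> nat \<Rightarrow> (nat \<Rightarrow> bool) set" where
  "cube_face d i = {\<epsilon> \<in> cube d. \<not> \<epsilon> i}"

definition pin :: "((nat \<Rightarrow> bool) \<Rightarrow> 'b) \<Rightarrow> nat \<Rightarrow> bool \<Rightarrow> (nat \<Rightarrow> bool) \<Rightarrow> 'b" where
  "pin F i b = (\<lambda>\<epsilon>. F (\<epsilon>(i := b)))"

definition face_prod ::
    "nat \<Rightarrow> nat \<Rightarrow> ((nat \<Rightarrow> bool) \<Rightarrow> (nat \<Rightarrow> 'a) \<Rightarrow> real) \<Rightarrow> (nat \<Rightarrow> bool \<Rightarrow> 'a) \<Rightarrow> 'a \<Rightarrow> real" where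
  "face_prod d i F w x = (\<Prod>\<epsilon>\<in>cube_face d i. F \<epsilon> (vertex d (w(i := (\<lambda>_. x))) \<epsilon>))"

lemma pin_pin [simp]: "pin (pin F i b) i b' = pin F i b"
  by (simp add: pin_def)

lemma prod_cube_split:
  assumes i: "i < d"
  shows "(\<Prod>\<epsilon>\<in>cube d. P \<epsilon>) = (\<Prod>\<epsilon>\<in>cube_face d i. P \<epsilon> * P (\<epsilon>(i := True)))"
proof -
  let ?up = "\<lambda>\<epsilon>. \<epsilon>(i := True)"
  have split: "cube d = cube_face d i \<union> ?up ` cube_face d i"
  proof (intro equalityI subsetI)
    fix \<epsilon> assume \<epsilon>: "\<epsilon> \<in> cube d"
    show "\<epsilon> \<in> cube_face d i \<union> ?up ` cube_face d i"
    proof (cases "\<epsilon> i")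
      case True
      then have "\<epsilon> = ?up (\<epsilon>(i := False))" by (auto simp: fun_eq_iff)
      moreover have "\<epsilon>(i := False) \<in> cube_face d i"
        using fun_upd_in_cube[OF i \<epsilon>] by (simp add: cube_face_def)
      ultimately show ?thesis by blast
    qed (use \<epsilon> in \<open>simp add: cube_face_def\<close>)
  qed (use fun_upd_in_cube[OF i] in \<open>auto simp: cube_face_def\<close>)
  have fin: "finite (cube_face d i)"
    using finite_cube by (simp add: cube_face_def)
  have "(\<Prod>\<epsilon>\<in>cube d. P \<epsilon>) = (\<Prod>\<epsilon>\<in>cube_face d i. P \<epsilon>) * (\<Prod>\<epsilon>\<in>?up ` cube_face d i. P \<epsilon>)"
    unfolding split using fin by (intro prod.union_disjoint) (auto simp: cube_face_def)
  also have "(\<Prod>\<epsilon>\<in>?up ` cube_face d i. P \<epsilon>) = (\<Prod>\<epsilon>\<in>cube_face d i. P (?up \<epsilon>))"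
    by (rule prod.reindex_cong[where l = ?up]) (auto simp: inj_on_def cube_face_def fun_eq_iff)
  finally show ?thesis
    by (simp add: prod.distrib)
qed

lemma sum_Omega_split:
  assumes i: "i < d"
  shows "(\<Sum>w\<in>Omega d V. h w) =
    (\<Sum>\<rho>\<in>({..<d} - {i}) \<rightarrow>\<^sub>E ((UNIV :: bool set) \<rightarrow>\<^sub>E V). \<Sum>x\<in>V. \<Sum>y\<in>V.
       h (\<rho>(i := (\<lambda>b. if b then y else x))))"
proof -
  let ?R = "({..<d} - {i}) \<rightarrow>\<^sub>E ((UNIV :: bool set) \<rightarrow>\<^sub>E V)"
  let ?g = "\<lambda>(\<rho>, x, y). \<rho>(i := (\<lambda>b::bool. if b then y else x))"
  let ?g' = "\<lambda>w. (w(i := undefined), w i False, w i True)"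
  have "bij_betw ?g (?R \<times> V \<times> V) (Omega d V)"
    by (rule bij_betw_byWitness[where f' = ?g'])
       (use i in \<open>auto simp: Omega_def PiE_def extensional_def Pi_def fun_eq_iff\<close>)
  then have "(\<Sum>w\<in>Omega d V. h w) = (\<Sum>p\<in>?R \<times> V \<times> V. h (?g p))"
    by (simp add: sum.reindex_bij_betw)
  then show ?thesis
    by (simp add: sum.cartesian_product')
qed

lemma gowers_sum_split:
  assumes i: "i < d"
  shows "gowers_sum d V F = (\<Sum>\<rho>\<in>({..<d} - {i}) \<rightarrow>\<^sub>E ((UNIV :: bool set) \<rightarrow>\<^sub>E V).
           (\<Sum>x\<in>V. face_prod d i (pin F i False) \<rho> x) * (\<Sum>y\<in>V. face_prod d i (pin F i True) \<rho> y))"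
proof -
  have "(\<Prod>\<epsilon>\<in>cube d. F \<epsilon> (vertex d (\<rho>(i := (\<lambda>b. if b then y else x))) \<epsilon>))
       = face_prod d i (pin F i False) \<rho> x * face_prod d i (pin F i True) \<rho> y" for \<rho> x y
  proof -
    let ?w = "\<rho>(i := (\<lambda>b. if b then y else x))"
    have "vertex d ?w \<epsilon> = vertex d (\<rho>(i := (\<lambda>_. x))) \<epsilon>"
      and "vertex d ?w (\<epsilon>(i := True)) = vertex d (\<rho>(i := (\<lambda>_. y))) \<epsilon>"
      and "\<epsilon>(i := False) = \<epsilon>"
      if "\<epsilon> \<in> cube_face d i" for \<epsilon>
      using that by (auto simp: vertex_def cube_face_def fun_eq_iff)
    then show ?thesis
      unfolding prod_cube_split[OF i] face_prod_def pin_def prod.distrib by simp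
  qed
  then show ?thesis
    unfolding gowers_sum_def sum_Omega_split[OF i] by (simp add: sum_product)
qed

lemma gowers_sum_pin:
  assumes "i < d"
  shows "gowers_sum d V (pin F i b) =
    (\<Sum>\<rho>\<in>({..<d} - {i}) \<rightarrow>\<^sub>E ((UNIV :: bool set) \<rightarrow>\<^sub>E V). (\<Sum>x\<in>V. face_prod d i (pin F i b) \<rho> x)\<^sup>2)"
  using gowers_sum_split[OF assms, of V "pin F i b"] by (simp add: power2_eq_square)

lemma gowers_sum_pin_nonneg: "i < d \<Longrightarrow> 0 \<le> gowers_sum d V (pin F i b)"
  by (simp add: gowers_sum_pin sum_nonneg)

lemma gowers_sum_const_nonneg: "0 < d \<Longrightarrow> 0 \<le> gowers_sum d V (\<lambda>_. f)"
  using gowers_sum_pin_nonneg[of 0 d V "\<lambda>_. f"] by (simp add: pin_def)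

lemma gowers_sum_square_le_pin:
  assumes i: "i < d"
  shows "(gowers_sum d V F)\<^sup>2 \<le> gowers_sum d V (pin F i False) * gowers_sum d V (pin F i True)"
  unfolding gowers_sum_split[OF i, of V F] gowers_sum_pin[OF i]
  by (rule Cauchy_Schwarz_ineq_sum)

definition prefix_merge :: "nat \<Rightarrow> (nat \<Rightarrow> bool) \<Rightarrow> (nat \<Rightarrow> bool) \<Rightarrow> nat \<Rightarrow> bool" where
  "prefix_merge k \<eta> \<epsilon> = (\<lambda>j. if j < k then \<eta> j else \<epsilon> j)"

lemma pin_prefix_merge:
  "pin (\<lambda>\<epsilon>. F (prefix_merge k \<eta> \<epsilon>)) k b = (\<lambda>\<epsilon>. F (prefix_merge (Suc k) (\<eta>(k := b)) \<epsilon>))"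
  by (auto simp: pin_def prefix_merge_def fun_eq_iff intro!: arg_cong[where f = F])

lemma prod_cube_Suc:
  "(\<Prod>\<eta>\<in>cube (Suc k). P \<eta>) = (\<Prod>\<eta>\<in>cube k. P (\<eta>(k := False)) * P (\<eta>(k := True)))"
proof -
  have "cube (Suc k) = (\<lambda>(b, \<eta>). \<eta>(k := b)) ` (UNIV \<times> cube k)"
    using PiE_insert_eq[of k "{..<k}" "\<lambda>_. UNIV :: bool set"] by (simp add: cube_def lessThan_Suc)
  moreover have "inj_on (\<lambda>(b, \<eta>). \<eta>(k := b)) (UNIV \<times> cube k)"
    using inj_combinator[of k "{..<k}" "\<lambda>_. UNIV :: bool set"] by (simp add: cube_def)
  ultimately have "(\<Prod>\<eta>\<in>cube (Suc k). P \<eta>) = (\<Prod>b\<in>UNIV. \<Prod>\<eta>\<in>cube k. P (\<eta>(k := b)))"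
    by (simp add: prod.reindex prod.cartesian_product')
  then show ?thesis
    by (simp add: UNIV_bool prod.distrib)
qed

lemma gowers_sum_pow_le_prefix:
  "k \<le> d \<Longrightarrow> \<bar>gowers_sum d V F\<bar> ^ 2 ^ k
     \<le> \<bar>\<Prod>\<eta>\<in>cube k. gowers_sum d V (\<lambda>\<epsilon>. F (prefix_merge k \<eta> \<epsilon>))\<bar>"
proof (induction k)
  case 0
  have "cube 0 = {\<lambda>_. undefined}" by (simp add: cube_def)
  then show ?case by (simp add: prefix_merge_def)
next
  case (Suc k)
  then have k: "k < d" by simp
  let ?P = "\<lambda>k \<eta>. gowers_sum d V (\<lambda>\<epsilon>. F (prefix_merge k \<eta> \<epsilon>))"
  have "\<bar>gowers_sum d V F\<bar> ^ 2 ^ Suc k = (\<bar>gowers_sum d V F\<bar> ^ 2 ^ k)\<^sup>2"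
    by (simp add: power_mult[symmetric] mult.commute)
  also have "\<dots> \<le> \<bar>\<Prod>\<eta>\<in>cube k. ?P k \<eta>\<bar>\<^sup>2"
    using Suc by (intro power_mono) auto
  also have "\<dots> = (\<Prod>\<eta>\<in>cube k. ?P k \<eta>)\<^sup>2"
    by (rule power2_abs)
  also have "\<dots> = (\<Prod>\<eta>\<in>cube k. (?P k \<eta>)\<^sup>2)"
    by (simp add: prod_power_distrib)
  also have "\<dots> \<le> (\<Prod>\<eta>\<in>cube k. ?P (Suc k) (\<eta>(k := False)) * ?P (Suc k) (\<eta>(k := True)))"
    using gowers_sum_square_le_pin[OF k, of V "\<lambda>\<epsilon>. F (prefix_merge k _ \<epsilon>)"]
    by (intro prod_mono) (simp add: pin_prefix_merge)
  also have "\<dots> = \<bar>\<Prod>\<eta>\<in>cube (Suc k). ?P (Suc k) \<eta>\<bar>"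
    using gowers_sum_pin_nonneg[OF k, of V "\<lambda>\<epsilon>. F (prefix_merge k _ \<epsilon>)"]
    by (simp add: prod_cube_Suc pin_prefix_merge prod_nonneg)
  finally show ?case .
qed

lemma gowers_sum_pow_le:
  assumes "0 < d"
  shows "\<bar>gowers_sum d V F\<bar> ^ 2 ^ d \<le> (\<Prod>\<eta>\<in>cube d. gowers_sum d V (\<lambda>_. F \<eta>))"
proof -
  have "gowers_sum d V (\<lambda>\<epsilon>. F (prefix_merge d \<eta> \<epsilon>)) = gowers_sum d V (\<lambda>_. F \<eta>)"
    if "\<eta> \<in> cube d" for \<eta>
  proof (rule gowers_sum_cong)
    fix \<epsilon> assume "\<epsilon> \<in> cube d"
    with that have "prefix_merge d \<eta> \<epsilon> = \<eta>"
      by (auto simp: prefix_merge_def cube_def PiE_def extensional_def fun_eq_iff)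
    then show "F (prefix_merge d \<eta> \<epsilon>) = F \<eta>" by simp
  qed
  moreover have "0 \<le> (\<Prod>\<eta>\<in>cube d. gowers_sum d V (\<lambda>_. F \<eta>))"
    using gowers_sum_const_nonneg[OF assms] by (intro prod_nonneg) blast
  ultimately show ?thesis
    using gowers_sum_pow_le_prefix[of d d V F] by simp
qed

section \<open>Elementary properties of the box norm\<close>

lemma box_norm_pow:
  assumes "0 < d"
  shows "box_norm d V f ^ 2 ^ d = gowers_sum d V (\<lambda>_. f) / real (card V) ^ (2 * d)"
  unfolding box_norm_gowers_sum using gowers_sum_const_nonneg[OF assms]
  by (intro real_root_pow_pos2 divide_nonneg_nonneg) auto

lemma box_norm_nonneg: "0 < d \<Longrightarrow> 0 \<le> box_norm d V f"
  unfolding box_norm_gowers_sum using gowers_sum_const_nonneg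
  by (intro real_root_ge_zero divide_nonneg_nonneg) auto

lemma gowers_Cauchy_Schwarz:
  assumes V: "finite V" "V \<noteq> {}" and d: "0 < d"
  shows "\<bar>gowers_sum d V F\<bar> / real (card V) ^ (2 * d) \<le> (\<Prod>\<eta>\<in>cube d. box_norm d V (F \<eta>))"
proof -
  let ?K = "real (card V) ^ (2 * d)"
  have K: "0 < ?K" using V by (simp add: card_gt_0_iff)
  have "(\<bar>gowers_sum d V F\<bar> / ?K) ^ 2 ^ d = \<bar>gowers_sum d V F\<bar> ^ 2 ^ d / ?K ^ 2 ^ d"
    by (simp add: power_divide)
  also have "\<dots> \<le> (\<Prod>\<eta>\<in>cube d. gowers_sum d V (\<lambda>_. F \<eta>)) / ?K ^ 2 ^ d"
    using gowers_sum_pow_le[OF d] K by (intro divide_right_mono) auto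
  also have "\<dots> = (\<Prod>\<eta>\<in>cube d. box_norm d V (F \<eta>) ^ 2 ^ d)"
    by (simp add: box_norm_pow[OF d] prod_dividef card_cube)
  also have "\<dots> = (\<Prod>\<eta>\<in>cube d. box_norm d V (F \<eta>)) ^ 2 ^ d"
    by (rule prod_power_distrib[symmetric])
  finally show ?thesis
    by (simp add: power_mono_iff prod_nonneg box_norm_nonneg[OF d])
qed

lemma sum_Omega_vertex:
  assumes V: "finite V" and \<epsilon>: "\<epsilon> \<in> cube d"
  shows "(\<Sum>w\<in>Omega d V. h (vertex d w \<epsilon>)) = real (card V) ^ d * (\<Sum>v\<in>tuples d V. h v)"
proof -
  let ?f = "\<lambda>w. (vertex d w \<epsilon>, vertex d w (Not \<circ> \<epsilon>))"
  let ?f' = "\<lambda>(u, v). \<lambda>i\<in>{..<d}. \<lambda>b. if b = \<epsilon> i then u i else v i"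
  have "bij_betw ?f (Omega d V) (tuples d V \<times> tuples d V)"
  proof (rule bij_betw_byWitness[where f' = ?f'])
    show "\<forall>w\<in>Omega d V. ?f' (?f w) = w"
      by (auto simp: vertex_def Omega_def PiE_def extensional_def fun_eq_iff)
    show "\<forall>p\<in>tuples d V \<times> tuples d V. ?f (?f' p) = p"
      by (auto simp: vertex_def tuples_def PiE_def extensional_def fun_eq_iff)
  qed (auto simp: vertex_def tuples_def Omega_def PiE_def Pi_def)
  then have "(\<Sum>w\<in>Omega d V. h (vertex d w \<epsilon>)) = (\<Sum>p\<in>tuples d V \<times> tuples d V. h (fst p))"
    by (subst sum.reindex_bij_betw[symmetric]) auto
  then show ?thesis
    by (simp add: sum.cartesian_product' card_tuples[OF V] sum_distrib_left)
qed

lemma box_norm_scale: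
  assumes d: "0 < d" and a: "0 \<le> a"
  shows "box_norm d V (\<lambda>x. a * f x) = a * box_norm d V f"
proof -
  have "gowers_sum d V (\<lambda>_ x. a * f x) = a ^ 2 ^ d * gowers_sum d V (\<lambda>_. f)"
    by (simp add: gowers_sum_def prod.distrib card_cube sum_distrib_left)
  then have "box_norm d V (\<lambda>x. a * f x)
      = root (2 ^ d) (a ^ 2 ^ d * (gowers_sum d V (\<lambda>_. f) / real (card V) ^ (2 * d)))"
    by (simp add: box_norm_gowers_sum)
  then show ?thesis
    unfolding real_root_mult box_norm_gowers_sum using a by (simp add: real_root_power_cancel)
qed

lemma box_norm_const:
  assumes V: "finite V" "V \<noteq> {}" and d: "0 < d" and a: "0 \<le> a"
  shows "box_norm d V (\<lambda>_. a) = a"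
proof -
  have "box_norm d V (\<lambda>_. 1) = 1"
    using V by (simp add: box_norm_gowers_sum gowers_sum_def card_Omega card_gt_0_iff)
  then show ?thesis
    using box_norm_scale[OF d a, of V "\<lambda>_. 1"] by simp
qed

lemma abs_avg_le_box_norm:
  assumes V: "finite V" "V \<noteq> {}" and d: "0 < d"
  shows "\<bar>avg d V h\<bar> \<le> box_norm d V h"
proof -
  define \<epsilon>\<^sub>0 where "\<epsilon>\<^sub>0 = (\<lambda>i\<in>{..<d}. False)"
  have \<epsilon>\<^sub>0: "\<epsilon>\<^sub>0 \<in> cube d" by (simp add: \<epsilon>\<^sub>0_def cube_def)
  define F where "F = (\<lambda>\<epsilon>. if \<epsilon> = \<epsilon>\<^sub>0 then h else (\<lambda>_. 1))"
  have "(\<Prod>\<epsilon>\<in>cube d. F \<epsilon> (vertex d w \<epsilon>))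
      = (\<Prod>\<epsilon>\<in>cube d. if \<epsilon> = \<epsilon>\<^sub>0 then h (vertex d w \<epsilon>) else 1)" for w
    by (intro prod.cong) (auto simp: F_def)
  then have "(\<Prod>\<epsilon>\<in>cube d. F \<epsilon> (vertex d w \<epsilon>)) = h (vertex d w \<epsilon>\<^sub>0)" for w
    using \<epsilon>\<^sub>0 by (simp add: prod.delta[OF finite_cube])
  then have "gowers_sum d V F = real (card V) ^ d * (\<Sum>v\<in>tuples d V. h v)"
    by (simp add: gowers_sum_def sum_Omega_vertex[OF V(1) \<epsilon>\<^sub>0])
  then have "avg d V h = gowers_sum d V F / real (card V) ^ (2 * d)"
    using V by (simp add: avg_def power_add mult_2 card_gt_0_iff)
  moreover have "(\<Prod>\<eta>\<in>cube d. box_norm d V (F \<eta>))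
      = (\<Prod>\<eta>\<in>cube d. if \<eta> = \<epsilon>\<^sub>0 then box_norm d V h else 1)"
    using box_norm_const[OF V d, of 1] by (intro prod.cong) (auto simp: F_def)
  then have "(\<Prod>\<eta>\<in>cube d. box_norm d V (F \<eta>)) = box_norm d V h"
    using \<epsilon>\<^sub>0 by (simp add: prod.delta[OF finite_cube])
  ultimately show ?thesis
    using gowers_Cauchy_Schwarz[OF V d, of F] by (simp add: abs_divide)
qed

lemma prod_if_mem_split:
  assumes "finite A" "B \<subseteq> A"
  shows "(\<Prod>x\<in>A. if x \<in> B then f x else g x) = (\<Prod>x\<in>B. f x) * (\<Prod>x\<in>A - B. g x)"
  using assms by (simp add: prod.If_cases Int_absorb1 Diff_eq)

lemma gowers_sum_add:
  "gowers_sum d V (\<lambda>_ x. u x + v x)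
     = (\<Sum>S\<in>Pow (cube d). gowers_sum d V (\<lambda>\<epsilon> x. if \<epsilon> \<in> S then u x else v x))"
proof -
  have "(\<Prod>\<epsilon>\<in>cube d. u (vertex d w \<epsilon>) + v (vertex d w \<epsilon>))
      = (\<Sum>S\<in>Pow (cube d).
           (\<Prod>\<epsilon>\<in>S. u (vertex d w \<epsilon>)) * (\<Prod>\<epsilon>\<in>cube d - S. v (vertex d w \<epsilon>)))" for w
    by (rule prod_add[OF finite_cube])
  also have "\<dots> w = (\<Sum>S\<in>Pow (cube d).
           \<Prod>\<epsilon>\<in>cube d. if \<epsilon> \<in> S then u (vertex d w \<epsilon>) else v (vertex d w \<epsilon>))" for w
    by (intro sum.cong refl) (simp add: prod_if_mem_split[OF finite_cube])
  finally show ?thesis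
    unfolding gowers_sum_def by (simp add: sum.swap[of _ "Omega d V"])
qed

lemma box_norm_triangle:
  assumes V: "finite V" "V \<noteq> {}" and d: "0 < d"
  shows "box_norm d V (\<lambda>x. u x + v x) \<le> box_norm d V u + box_norm d V v"
proof -
  let ?K = "real (card V) ^ (2 * d)"
  let ?a = "box_norm d V u" and ?b = "box_norm d V v"
  let ?F = "\<lambda>S \<epsilon> x. if \<epsilon> \<in> S then u x else v x"
  have "gowers_sum d V F / ?K \<le> (\<Prod>\<eta>\<in>cube d. box_norm d V (F \<eta>))" for F
  proof -
    have "gowers_sum d V F / ?K \<le> \<bar>gowers_sum d V F\<bar> / ?K"
      by (simp add: divide_right_mono)
    then show ?thesis
      using gowers_Cauchy_Schwarz[OF V d, of F] by linarith
  qed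
  then have "box_norm d V (\<lambda>x. u x + v x) ^ 2 ^ d
      \<le> (\<Sum>S\<in>Pow (cube d). \<Prod>\<eta>\<in>cube d. box_norm d V (?F S \<eta>))"
    by (simp add: box_norm_pow[OF d] gowers_sum_add sum_divide_distrib sum_mono)
  also have "\<dots> = (\<Sum>S\<in>Pow (cube d). \<Prod>\<eta>\<in>cube d. if \<eta> \<in> S then ?a else ?b)"
    by (intro sum.cong prod.cong) auto
  also have "\<dots> = (\<Sum>S\<in>Pow (cube d). (\<Prod>\<eta>\<in>S. ?a) * (\<Prod>\<eta>\<in>cube d - S. ?b))"
    by (intro sum.cong refl) (simp add: prod_if_mem_split[OF finite_cube])
  also have "\<dots> = (\<Prod>\<eta>\<in>cube d. ?a + ?b)"
    by (rule prod_add[OF finite_cube, symmetric])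
  also have "\<dots> = (?a + ?b) ^ 2 ^ d"
    by (simp add: card_cube)
  finally show ?thesis
    by (simp add: power_mono_iff box_norm_nonneg[OF d])
qed

lemma box_norm_le_one:
  assumes V: "finite V" "V \<noteq> {}" and d: "0 < d" and f: "\<And>x. \<bar>f x\<bar> \<le> 1"
  shows "box_norm d V f \<le> 1"
proof -
  have "(\<Prod>\<epsilon>\<in>cube d. f (vertex d w \<epsilon>)) \<le> 1" for w
  proof -
    have "(\<Prod>\<epsilon>\<in>cube d. f (vertex d w \<epsilon>)) \<le> (\<Prod>\<epsilon>\<in>cube d. \<bar>f (vertex d w \<epsilon>)\<bar>)"
      unfolding abs_prod[symmetric] by (rule abs_ge_self)
    also have "\<dots> \<le> 1"
      using f by (intro prod_le_1) auto
    finally show ?thesis .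
  qed
  then have "gowers_sum d V (\<lambda>_. f) \<le> (\<Sum>w\<in>Omega d V. 1)"
    unfolding gowers_sum_def by (rule sum_mono)
  then have "box_norm d V f ^ 2 ^ d \<le> 1"
    using V by (simp add: box_norm_pow[OF d] card_Omega card_gt_0_iff)
  then show ?thesis
    using power_le_one_iff[OF box_norm_nonneg[OF d], of V f "2 ^ d"] by simp
qed

lemma avg_affine:
  assumes V: "finite V" "V \<noteq> {}"
  shows "avg d V (\<lambda>x. c + t * (f x - c)) = c + t * (avg d V f - c)"
proof -
  have "(\<Sum>v\<in>tuples d V. c + t * (f v - c))
      = real (card V) ^ d * c + t * ((\<Sum>v\<in>tuples d V. f v) - real (card V) ^ d * c)"
    by (simp add: sum.distrib sum_distrib_left sum_subtractf card_tuples[OF V(1)] algebra_simps)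
  then show ?thesis
    using V by (simp add: avg_def field_simps card_gt_0_iff)
qed

lemma avg_nonneg: "(\<And>x. 0 \<le> f x) \<Longrightarrow> 0 \<le> avg d V f"
  unfolding avg_def by (intro divide_nonneg_nonneg sum_nonneg) auto

lemma avg_le_one:
  assumes V: "finite V" "V \<noteq> {}" and f: "\<And>x. f x \<le> 1"
  shows "avg d V f \<le> 1"
proof -
  have "(\<Sum>v\<in>tuples d V. f v) \<le> (\<Sum>v\<in>tuples d V. 1)"
    by (rule sum_mono) (rule f)
  then show ?thesis
    using V by (simp add: avg_def card_tuples card_gt_0_iff)
qed

section \<open>Finite differences\<close>

(* The m-th forward difference of j -> j^k at 0. *)
definition finite_diff_power :: "nat \<Rightarrow> nat \<Rightarrow> real" where
  "finite_diff_power m k = (\<Sum>j\<le>m. (-1) ^ (m - j) * real (m choose j) * real j ^ k)"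

lemma finite_diff_power_Suc:
  "finite_diff_power (Suc n) (Suc k)
     = real (Suc n) * (\<Sum>t\<le>k. real (k choose t) * finite_diff_power n t)"
proof -
  have "finite_diff_power (Suc n) (Suc k) =
      (\<Sum>i\<le>n. (-1) ^ (Suc n - Suc i) * real (Suc n choose Suc i) * real (Suc i) ^ Suc k)"
    unfolding finite_diff_power_def by (subst sum.atMost_Suc_shift) simp
  also have "\<dots> = (\<Sum>i\<le>n. real (Suc n) * ((-1) ^ (n - i) * real (n choose i) * real (Suc i) ^ k))"
  proof (rule sum.cong[OF refl])
    fix i
    have e: "real (Suc n choose Suc i) * real (Suc i) = real (Suc n) * real (n choose i)"
      using Suc_times_binomial_eq[of n i] by (metis of_nat_mult)
    have "(-1) ^ (Suc n - Suc i) * real (Suc n choose Suc i) * real (Suc i) ^ Suc k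
        = (-1) ^ (n - i) * (real (Suc n choose Suc i) * real (Suc i)) * real (Suc i) ^ k"
      by (simp add: algebra_simps)
    also have "\<dots> = real (Suc n) * ((-1) ^ (n - i) * real (n choose i) * real (Suc i) ^ k)"
      by (simp only: e) (simp add: algebra_simps)
    finally show "(-1) ^ (Suc n - Suc i) * real (Suc n choose Suc i) * real (Suc i) ^ Suc k
        = real (Suc n) * ((-1) ^ (n - i) * real (n choose i) * real (Suc i) ^ k)" .
  qed
  also have "\<dots> = real (Suc n) * (\<Sum>i\<le>n. (-1) ^ (n - i) * real (n choose i) * real (Suc i) ^ k)"
    by (simp add: sum_distrib_left)
  also have "(\<Sum>i\<le>n. (-1) ^ (n - i) * real (n choose i) * real (Suc i) ^ k)
      = (\<Sum>i\<le>n. \<Sum>t\<le>k. real (k choose t) * ((-1) ^ (n - i) * real (n choose i) * real i ^ t))"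
  proof (rule sum.cong[OF refl])
    fix i
    have "real (Suc i) ^ k = (\<Sum>t\<le>k. real (k choose t) * real i ^ t * 1 ^ (k - t))"
      using binomial_ring[of "real i" 1 k] by (simp add: add.commute)
    then show "(-1) ^ (n - i) * real (n choose i) * real (Suc i) ^ k
      = (\<Sum>t\<le>k. real (k choose t) * ((-1) ^ (n - i) * real (n choose i) * real i ^ t))"
      by (simp add: sum_distrib_left algebra_simps)
  qed
  also have "\<dots> = (\<Sum>t\<le>k. real (k choose t) * finite_diff_power n t)"
    by (subst sum.swap) (simp add: finite_diff_power_def sum_distrib_left)
  finally show ?thesis .
qed

lemma finite_diff_power_Suc_0: "finite_diff_power (Suc n) 0 = 0"
proof -
  have "(1 + (-1::real)) ^ Suc n = (\<Sum>j\<le>Suc n. real (Suc n choose j) * 1 ^ j * (-1) ^ (Suc n - j))"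
    by (rule binomial_ring)
  then have "0 = (\<Sum>j\<le>Suc n. real (Suc n choose j) * (-1) ^ (Suc n - j))" by simp
  then show ?thesis by (simp add: finite_diff_power_def mult.commute)
qed

lemma finite_diff_power_eq: "k \<le> m \<Longrightarrow> finite_diff_power m k = (if k = m then fact m else 0)"
proof (induction m arbitrary: k)
  case 0
  then show ?case by (simp add: finite_diff_power_def)
next
  case (Suc n)
  show ?case
  proof (cases k)
    case 0
    then show ?thesis by (simp add: finite_diff_power_Suc_0)
  next
    case (Suc k')
    with Suc.prems have k': "k' \<le> n" by simp
    have "finite_diff_power (Suc n) k
        = real (Suc n) * (\<Sum>t\<le>k'. real (k' choose t) * finite_diff_power n t)"
      using finite_diff_power_Suc Suc by simp
    also have "(\<Sum>t\<le>k'. real (k' choose t) * finite_diff_power n t)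
        = (\<Sum>t\<le>k'. if t = n then real (k' choose t) * fact n else 0)"
      by (rule sum.cong[OF refl]) (use k' Suc.IH in auto)
    also have "\<dots> = (if k' = n then fact n else 0)"
      using k' by (simp add: sum.delta)
    finally show ?thesis using Suc by simp
  qed
qed

lemma prod_add_scaled_expand:
  fixes a b :: "'e \<Rightarrow> 'r::comm_semiring_1"
  assumes "finite E"
  shows "(\<Prod>e\<in>E. a e + t * b e)
       = (\<Sum>S\<in>Pow E. t ^ card S * ((\<Prod>e\<in>S. b e) * (\<Prod>e\<in>E - S. a e)))"
proof -
  have "(\<Prod>e\<in>E. a e + t * b e) = (\<Sum>S\<in>Pow E. (\<Prod>e\<in>S. t * b e) * (\<Prod>e\<in>E - S. a e))"
    using prod_add[OF assms, of "\<lambda>e. t * b e" a] by (simp add: add.commute)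
  then show ?thesis
    by (simp add: prod.distrib mult.assoc)
qed

lemma finite_diff_prod:
  fixes a b :: "'e \<Rightarrow> real"
  assumes E: "finite E" "card E = m"
  shows "(\<Sum>j\<le>m. (-1) ^ (m - j) * real (m choose j) * (\<Prod>e\<in>E. a e + real j * h * b e))
       = fact m * h ^ m * (\<Prod>e\<in>E. b e)"
proof -
  define c where "c S = (\<Prod>e\<in>S. b e) * (\<Prod>e\<in>E - S. a e)" for S
  have "(\<Sum>j\<le>m. (-1) ^ (m - j) * real (m choose j) * (\<Prod>e\<in>E. a e + real j * h * b e))
      = (\<Sum>j\<le>m. \<Sum>S\<in>Pow E. h ^ card S * c S * ((-1) ^ (m - j) * real (m choose j) * real j ^ card S))"
    unfolding prod_add_scaled_expand[OF E(1)] c_def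
    by (simp add: sum_distrib_left power_mult_distrib mult_ac)
  also have "\<dots> = (\<Sum>S\<in>Pow E. h ^ card S * c S * finite_diff_power m (card S))"
    by (subst sum.swap) (simp add: finite_diff_power_def sum_distrib_left)
  also have "\<dots> = (\<Sum>S\<in>Pow E. if S = E then h ^ m * c E * fact m else 0)"
  proof (rule sum.cong[OF refl])
    fix S assume "S \<in> Pow E"
    then have S: "S \<subseteq> E" by simp
    then have "card S \<le> m"
      using E card_mono by blast
    moreover have "card S = m \<longleftrightarrow> S = E"
      using card_subset_eq[OF E(1) S] E(2) by auto
    ultimately show "h ^ card S * c S * finite_diff_power m (card S)
        = (if S = E then h ^ m * c E * fact m else 0)"
      by (auto simp: finite_diff_power_eq)
  qed
  also have "\<dots> = fact m * h ^ m * (\<Prod>e\<in>E. b e)"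
    using E by (simp add: sum.delta' c_def)
  finally show ?thesis .
qed

lemma alternating_binomial_sum_le:
  assumes N: "0 < N" and close: "\<And>j. j \<le> N \<Longrightarrow> \<bar>\<phi> j - c\<bar> \<le> \<theta>"
  shows "(\<Sum>j\<le>N. (-1) ^ (N - j) * real (N choose j) * \<phi> j) \<le> 2 ^ N * \<theta>"
proof -
  have "(\<Sum>j\<le>N. (-1) ^ (N - j) * real (N choose j) * c) = finite_diff_power N 0 * c"
    by (simp add: finite_diff_power_def sum_distrib_right)
  also have "\<dots> = 0"
    using N finite_diff_power_Suc_0 by (cases N) auto
  finally have "(\<Sum>j\<le>N. (-1) ^ (N - j) * real (N choose j) * \<phi> j)
      = (\<Sum>j\<le>N. (-1) ^ (N - j) * real (N choose j) * (\<phi> j - c))"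
    by (simp add: right_diff_distrib sum_subtractf)
  also have "\<dots> \<le> (\<Sum>j\<le>N. real (N choose j) * \<theta>)"
  proof (rule sum_mono)
    fix j assume "j \<in> {..N}"
    then have "real (N choose j) * \<bar>\<phi> j - c\<bar> \<le> real (N choose j) * \<theta>"
      using close by (intro mult_left_mono) auto
    moreover have "\<bar>(-1) ^ (N - j) * real (N choose j) * (\<phi> j - c)\<bar> = real (N choose j) * \<bar>\<phi> j - c\<bar>"
      by (simp add: abs_mult)
    ultimately show "(-1) ^ (N - j) * real (N choose j) * (\<phi> j - c) \<le> real (N choose j) * \<theta>"
      using abs_ge_self[of "(-1) ^ (N - j) * real (N choose j) * (\<phi> j - c)"] by linarith
  qed
  also have "\<dots> = 2 ^ N * \<theta>"
    using choose_row_sum[of N] by (simp add: sum_distrib_right[symmetric] flip: of_nat_sum)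
  finally show ?thesis .
qed

lemma pow_div_fact_le_three_pow: "real n ^ n / fact n \<le> 3 ^ n"
proof -
  have exp: "(\<lambda>k. real n ^ k / fact k) sums exp (real n)"
    using exp_converges[of "real n"] by (simp add: divide_inverse mult.commute)
  have "(\<Sum>k\<in>{n}. real n ^ k / fact k) \<le> (\<Sum>k. real n ^ k / fact k)"
    by (rule sum_le_suminf[OF sums_summable[OF exp]]) auto
  then have "real n ^ n / fact n \<le> exp (real n)"
    using sums_unique[OF exp] by simp
  also have "exp (real n) = exp 1 ^ n"
    using exp_of_nat_mult[of n 1] by simp
  also have "\<dots> \<le> 3 ^ n"
    using exp_le by (intro power_mono) auto
  finally show ?thesis .
qed

lemma finite_diff_box_norm_pow:
  assumes d: "0 < d"
  shows "(\<Sum>j\<le>2 ^ d. (-1) ^ (2 ^ d - j) * real (2 ^ d choose j)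
            * box_norm d V (\<lambda>x. c + real j * h * g x) ^ 2 ^ d)
       = fact (2 ^ d) * h ^ 2 ^ d * box_norm d V g ^ 2 ^ d"
proof -
  let ?K = "real (card V) ^ (2 * d)"
  let ?coeff = "\<lambda>j. (-1) ^ (2 ^ d - j) * real (2 ^ d choose j)"
  have "(\<Sum>j\<le>2 ^ d. ?coeff j * (\<Prod>\<epsilon>\<in>cube d. c + real j * h * g (vertex d w \<epsilon>)))
      = fact (2 ^ d) * h ^ 2 ^ d * (\<Prod>\<epsilon>\<in>cube d. g (vertex d w \<epsilon>))" for w
    using finite_diff_prod[OF finite_cube card_cube, where a = "\<lambda>_. c" and b = "\<lambda>\<epsilon>. g (vertex d w \<epsilon>)"]
    by simp
  then have "(\<Sum>j\<le>2 ^ d. ?coeff j * gowers_sum d V (\<lambda>_ x. c + real j * h * g x))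
      = fact (2 ^ d) * h ^ 2 ^ d * gowers_sum d V (\<lambda>_. g)"
    unfolding gowers_sum_def sum_distrib_left by (subst sum.swap) simp
  then have "(\<Sum>j\<le>2 ^ d. ?coeff j * gowers_sum d V (\<lambda>_ x. c + real j * h * g x)) / ?K
      = fact (2 ^ d) * h ^ 2 ^ d * (gowers_sum d V (\<lambda>_. g) / ?K)"
    by simp
  then show ?thesis
    unfolding box_norm_pow[OF d] sum_divide_distrib by (simp only: times_divide_eq_right)
qed

section \<open>Box uniformity and the gap between box norm and density\<close>

lemma box_norm_interpolation_bounds:
  assumes V: "finite V" "V \<noteq> {}" and d: "0 < d" and f0: "\<And>x. 0 \<le> f x"
    and t: "0 \<le> t" "t \<le> 1"
  shows "avg d V f \<le> box_norm d V (\<lambda>x. avg d V f + t * (f x - avg d V f))"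
    and "box_norm d V (\<lambda>x. avg d V f + t * (f x - avg d V f)) \<le> box_norm d V f"
proof -
  define \<delta> where "\<delta> = avg d V f"
  have \<delta>0: "0 \<le> \<delta>" unfolding \<delta>_def by (rule avg_nonneg) (rule f0)
  have "avg d V (\<lambda>x. \<delta> + t * (f x - \<delta>)) = \<delta>"
    using avg_affine[OF V, of d \<delta> t f] by (simp add: \<delta>_def)
  then show "avg d V f \<le> box_norm d V (\<lambda>x. avg d V f + t * (f x - avg d V f))"
    using abs_avg_le_box_norm[OF V d, of "\<lambda>x. \<delta> + t * (f x - \<delta>)"] by (simp add: \<delta>_def)
  have "box_norm d V (\<lambda>x. \<delta> + t * (f x - \<delta>))
      = box_norm d V (\<lambda>x. (\<lambda>_. (1 - t) * \<delta>) x + (\<lambda>x. t * f x) x)"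
    by (simp add: algebra_simps)
  also have "\<dots> \<le> (1 - t) * \<delta> + t * box_norm d V f"
    using box_norm_triangle[OF V d, of "\<lambda>_. (1 - t) * \<delta>" "\<lambda>x. t * f x"]
      box_norm_const[OF V d, of "(1 - t) * \<delta>"] box_norm_scale[OF d t(1), of V f] t \<delta>0
    by simp
  also have "\<dots> \<le> box_norm d V f"
  proof -
    have "(1 - t) * \<delta> \<le> (1 - t) * box_norm d V f"
      using abs_avg_le_box_norm[OF V d, of f] t by (intro mult_left_mono) (auto simp: \<delta>_def)
    then show ?thesis
      by (simp add: algebra_simps)
  qed
  finally show "box_norm d V (\<lambda>x. avg d V f + t * (f x - avg d V f)) \<le> box_norm d V f"
    by (simp add: \<delta>_def)
qed

lemma box_norm_centered_pow_le:
  assumes V: "finite V" "V \<noteq> {}" and d: "0 < d" and f0: "\<And>x. 0 \<le> f x"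
    and gap: "box_norm d V f ^ 2 ^ d \<le> avg d V f ^ 2 ^ d + \<theta>"
  shows "box_norm d V (\<lambda>x. f x - avg d V f) ^ 2 ^ d \<le> 6 ^ 2 ^ d * \<theta>"
proof -
  define N where "N = (2::nat) ^ d"
  define \<delta> where "\<delta> = avg d V f"
  define g where "g = (\<lambda>x. f x - \<delta>)"
  define \<phi> where "\<phi> = (\<lambda>j. box_norm d V (\<lambda>x. \<delta> + real j * (1 / real N) * g x) ^ N)"
  have N0: "0 < N" by (simp add: N_def)
  have \<delta>0: "0 \<le> \<delta>" unfolding \<delta>_def by (rule avg_nonneg) (rule f0)
  have \<theta>0: "0 \<le> \<theta>"
    using gap power_mono[OF abs_avg_le_box_norm[OF V d, of f], of "2 ^ d"] \<delta>0
    by (simp add: \<delta>_def)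
  have close: "\<bar>\<phi> j - \<delta> ^ N\<bar> \<le> \<theta>" if "j \<le> N" for j
  proof -
    have t: "0 \<le> real j * (1 / real N)" "real j * (1 / real N) \<le> 1"
      using that N0 by auto
    note bounds = box_norm_interpolation_bounds[where f = f, OF V d f0 t]
    have "\<delta> ^ N \<le> \<phi> j"
      using power_mono[OF bounds(1)] \<delta>0 by (simp add: \<phi>_def \<delta>_def g_def)
    moreover have "\<phi> j \<le> box_norm d V f ^ N"
      using power_mono[OF bounds(2)] bounds(1) \<delta>0 by (simp add: \<phi>_def \<delta>_def g_def)
    ultimately show ?thesis
      using gap by (simp add: N_def \<delta>_def)
  qed
  have "fact N * (1 / real N) ^ N * box_norm d V g ^ N
      = (\<Sum>j\<le>N. (-1) ^ (N - j) * real (N choose j) * \<phi> j)"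
    using finite_diff_box_norm_pow[OF d, of V \<delta> "1 / real N" g] by (simp add: \<phi>_def N_def)
  also have "\<dots> \<le> 2 ^ N * \<theta>"
    using close by (rule alternating_binomial_sum_le[OF N0])
  finally have "box_norm d V g ^ N \<le> 2 ^ N * \<theta> * (real N ^ N / fact N)"
    using N0 by (simp add: power_divide field_simps)
  also have "\<dots> \<le> 2 ^ N * \<theta> * 3 ^ N"
    using \<theta>0 by (intro mult_left_mono pow_div_fact_le_three_pow) auto
  finally show ?thesis
    by (simp add: N_def g_def \<delta>_def power_mult_distrib[symmetric] mult.commute mult.left_commute)
qed

lemma box_norm_centered_le:
  assumes V: "finite V" "V \<noteq> {}" and d: "0 < d"
    and f: "\<And>x. 0 \<le> f x" "\<And>x. f x \<le> 1" and \<theta>: "0 < \<theta>"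
    and gap: "box_norm d V f ^ 2 ^ d \<le> avg d V f ^ 2 ^ d + \<theta>"
  shows "box_norm d V (\<lambda>x. f x - avg d V f) \<le> 12 * \<theta> powr (1 / 8 ^ d)"
proof (cases "\<theta> \<le> 1")
  case True
  let ?g = "box_norm d V (\<lambda>x. f x - avg d V f)"
  let ?r = "\<theta> powr (1 / 2 ^ d)"
  have "?r ^ 2 ^ d = \<theta>"
    using \<theta> by (simp add: powr_realpow[symmetric] powr_powr)
  then have "?g ^ 2 ^ d \<le> (6 * ?r) ^ 2 ^ d"
    using box_norm_centered_pow_le[OF V d f(1) gap] by (simp add: power_mult_distrib)
  then have "?g \<le> 6 * ?r"
    by (rule power_mono_iff[where n = "2 ^ d", THEN iffD1, rotated 3])
       (simp_all add: box_norm_nonneg[OF d])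
  also have "?r \<le> \<theta> powr (1 / 8 ^ d)"
    using True \<theta> by (intro powr_mono') (auto intro!: divide_left_mono power_mono)
  finally show ?thesis
    using powr_ge_zero[of \<theta> "1 / 8 ^ d"] by linarith
next
  case False
  have "avg d V f \<le> 1" "0 \<le> avg d V f"
    using avg_le_one[OF V f(2)] avg_nonneg[OF f(1)] by auto
  then have "\<bar>f x - avg d V f\<bar> \<le> 1" for x
    unfolding abs_le_iff using f(1)[of x] f(2)[of x] by linarith
  then have "box_norm d V (\<lambda>x. f x - avg d V f) \<le> 1"
    by (rule box_norm_le_one[OF V d])
  moreover have "1 \<le> \<theta> powr (1 / 8 ^ d)"
    using False by (intro ge_one_powr_ge_zero) auto
  ultimately show ?thesis
    by simp
qed

lemma box_norm_gap_le:
  assumes V: "finite V" "V \<noteq> {}" and d: "0 < d"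
    and f: "\<And>x. 0 \<le> f x" "\<And>x. f x \<le> 1"
    and \<rho>: "box_norm d V (\<lambda>x. f x - avg d V f) \<le> \<rho>"
  shows "box_norm d V f ^ 2 ^ d \<le> avg d V f ^ 2 ^ d + 2 ^ d * \<rho>"
proof -
  define N where "N = (2::nat) ^ d"
  define \<delta> where "\<delta> = avg d V f"
  define a where "a = box_norm d V f"
  have \<delta>0: "0 \<le> \<delta>" unfolding \<delta>_def by (rule avg_nonneg) (rule f(1))
  have \<delta>a: "\<delta> \<le> a" using abs_avg_le_box_norm[OF V d, of f] by (simp add: \<delta>_def a_def)
  have a1: "a \<le> 1" unfolding a_def by (rule box_norm_le_one[OF V d]) (use f in auto)
  have "a \<le> box_norm d V (\<lambda>x. f x - \<delta>) + box_norm d V (\<lambda>_. \<delta>)"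
    using box_norm_triangle[OF V d, of "\<lambda>x. f x - \<delta>" "\<lambda>_. \<delta>"] by (simp add: a_def)
  then have a\<rho>: "a - \<delta> \<le> \<rho>"
    using \<rho> box_norm_const[OF V d \<delta>0] by (simp add: \<delta>_def)
  have "a ^ N - \<delta> ^ N = (a - \<delta>) * (\<Sum>i<N. \<delta> ^ (N - Suc i) * a ^ i)"
    by (rule power_diff_sumr2)
  also have "\<dots> \<le> (a - \<delta>) * real N"
  proof (rule mult_left_mono)
    have "\<delta> ^ (N - Suc i) * a ^ i \<le> 1" for i
      using \<delta>0 \<delta>a a1 by (intro mult_le_one power_le_one) auto
    then show "(\<Sum>i<N. \<delta> ^ (N - Suc i) * a ^ i) \<le> real N"
      using sum_bounded_above[of "{..<N}" "\<lambda>i. \<delta> ^ (N - Suc i) * a ^ i" 1] by simp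
  qed (use \<delta>a in simp)
  also have "\<dots> \<le> \<rho> * real N"
    using a\<rho> by (intro mult_right_mono) auto
  finally show ?thesis
    by (simp add: N_def a_def \<delta>_def mult.commute)
qed

section \<open>Boxes of [n] and the random array\<close>

definition box_elem :: "(nat \<Rightarrow> nat set) \<Rightarrow> nat \<Rightarrow> bool \<Rightarrow> nat" where
  "box_elem H i b = (if b then Max (H i) else Min (H i))"

definition box_set :: "(nat \<Rightarrow> nat set) \<Rightarrow> nat \<Rightarrow> (nat \<Rightarrow> bool) \<Rightarrow> nat set" where
  "box_set H d \<epsilon> = (\<lambda>i. box_elem H i (\<epsilon> i)) ` {..<d}"

definition box_support :: "(nat \<Rightarrow> nat set) \<Rightarrow> nat \<Rightarrow> nat set" where
  "box_support H d = (\<lambda>(i, b). box_elem H i b) ` ({..<d} \<times> UNIV)"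

(* The values of xi on the box, read as the point omega of V^(2d) in the definition of the box norm. *)
definition box_sample :: "(nat \<Rightarrow> nat set) \<Rightarrow> nat \<Rightarrow> (nat \<Rightarrow> 'a) \<Rightarrow> nat \<Rightarrow> bool \<Rightarrow> 'a" where
  "box_sample H d \<xi> = (\<lambda>i\<in>{..<d}. \<lambda>b. \<xi> (box_elem H i b))"

lemma box_family_pair:
  assumes H: "box_family d n H" and i: "i < d"
  shows "Min (H i) < Max (H i)" "x \<in> H i \<longleftrightarrow> x = Min (H i) \<or> x = Max (H i)" "H i \<subseteq> {1..n}"
proof -
  obtain y z where yz: "H i = {y, z}" "y \<noteq> z"
    using H i card_2_iff[of "H i"] by (auto simp: box_family_def)
  then show "Min (H i) < Max (H i)" "x \<in> H i \<longleftrightarrow> x = Min (H i) \<or> x = Max (H i)"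
    by (auto simp: min_def max_def)
  show "H i \<subseteq> {1..n}"
    using H i by (simp add: box_family_def)
qed

lemma box_family_Max_less_Min:
  assumes H: "box_family d n H"
  shows "i < j \<Longrightarrow> j < d \<Longrightarrow> Max (H i) < Min (H j)"
proof (induction j)
  case (Suc j)
  have "Max (H j) < Min (H (Suc j))"
    using H Suc.prems by (simp add: box_family_def)
  moreover have "i < j \<Longrightarrow> Max (H i) < Max (H j)"
    using Suc box_family_pair(1)[OF H, of j] by simp
  ultimately show ?case
    using Suc.prems by (cases "i = j") auto
qed simp

lemma box_elem_mem: "box_family d n H \<Longrightarrow> i < d \<Longrightarrow> box_elem H i b \<in> H i"
  by (simp add: box_family_pair(2) box_elem_def)

lemma box_elem_less:
  assumes H: "box_family d n H" and "i < j" "j < d"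
  shows "box_elem H i b < box_elem H j b'"
proof -
  have "box_elem H i b \<le> Max (H i)"
    using box_family_pair(1)[OF H, of i] assms by (simp add: box_elem_def)
  moreover have "Min (H j) \<le> box_elem H j b'"
    using box_family_pair(1)[OF H, of j] assms by (simp add: box_elem_def)
  ultimately show ?thesis
    using box_family_Max_less_Min[OF H assms(2,3)] by linarith
qed

lemma box_elem_inj:
  assumes H: "box_family d n H" and "i < d" "j < d" and eq: "box_elem H i b = box_elem H j b'"
  shows "i = j \<and> b = b'"
proof -
  have "i = j"
  proof (cases i j rule: linorder_cases)
    case less
    then show ?thesis using box_elem_less[OF H less \<open>j < d\<close>, of b b'] eq by simp
  next
    case greater
    then show ?thesis using box_elem_less[OF H greater \<open>i < d\<close>, of b' b] eq by simp
  qed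
  moreover have "b = b'"
    using eq \<open>i = j\<close> box_family_pair(1)[OF H \<open>i < d\<close>] by (auto simp: box_elem_def split: if_splits)
  ultimately show ?thesis ..
qed

lemma box_elem_mem_iff:
  assumes H: "box_family d n H" and "i < d" "j < d"
  shows "box_elem H j b \<in> H i \<longleftrightarrow> i = j"
proof
  assume "box_elem H j b \<in> H i"
  then have "box_elem H j b = box_elem H i False \<or> box_elem H j b = box_elem H i True"
    by (simp add: box_family_pair(2)[OF H \<open>i < d\<close>] box_elem_def)
  then show "i = j"
    using box_elem_inj[OF H \<open>j < d\<close> \<open>i < d\<close>] by blast
qed (use box_elem_mem[OF H \<open>j < d\<close>] in simp)

lemma box_elem_range: "box_family d n H \<Longrightarrow> i < d \<Longrightarrow> box_elem H i b \<in> {1..n}"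
  using box_elem_mem box_family_pair(3) by blast

lemma card_box_set: "box_family d n H \<Longrightarrow> card (box_set H d \<epsilon>) = d"
  unfolding box_set_def using box_elem_inj by (subst card_image) (auto simp: inj_on_def)

lemma box_set_Int:
  "box_family d n H \<Longrightarrow> i < d \<Longrightarrow> box_set H d \<epsilon> \<inter> H i = {box_elem H i (\<epsilon> i)}"
  using box_elem_mem_iff by (auto simp: box_set_def)

lemma sorted_list_of_box_set:
  assumes H: "box_family d n H"
  shows "sorted_list_of_set (box_set H d \<epsilon>) = map (\<lambda>i. box_elem H i (\<epsilon> i)) [0..<d]"
proof -
  let ?l = "map (\<lambda>i. box_elem H i (\<epsilon> i)) [0..<d]"
  have "sorted_wrt (<) ?l"
    unfolding sorted_wrt_iff_nth_less using box_elem_less[OF H] by auto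
  moreover have "set ?l = box_set H d \<epsilon>"
    by (auto simp: box_set_def)
  moreover have "length ?l = card (box_set H d \<epsilon>)"
    by (simp add: card_box_set[OF H])
  moreover have "finite (box_set H d \<epsilon>)"
    by (simp add: box_set_def)
  ultimately show ?thesis
    using sorted_list_of_set_unique by blast
qed

lemma box_eq_image_box_set:
  assumes H: "box_family d n H"
  shows "box d n H = box_set H d ` cube d"
proof
  show "box_set H d ` cube d \<subseteq> box d n H"
    using box_elem_range[OF H] card_box_set[OF H] box_set_Int[OF H]
    by (auto simp: box_def box_set_def)
  show "box d n H \<subseteq> box_set H d ` cube d"
  proof
    fix s assume s: "s \<in> box d n H"
    define \<epsilon> where "\<epsilon> = (\<lambda>i\<in>{..<d}. Max (H i) \<in> s)"
    have "box_elem H i (\<epsilon> i) \<in> s" if i: "i < d" for i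
    proof -
      obtain x where "s \<inter> H i = {x}"
        using s i card_1_singleton_iff[of "s \<inter> H i"] by (auto simp: box_def)
      then have "x \<in> s" "x = Min (H i) \<or> x = Max (H i)"
        using box_family_pair(2)[OF H i] by auto
      then show ?thesis
        using i by (auto simp: \<epsilon>_def box_elem_def)
    qed
    then have "box_set H d \<epsilon> \<subseteq> s"
      by (auto simp: box_set_def)
    moreover have "finite s" "card s = d"
      using s finite_subset[of s "{1..n}"] by (auto simp: box_def)
    ultimately have "box_set H d \<epsilon> = s"
      using card_box_set[OF H] by (simp add: card_subset_eq)
    moreover have "\<epsilon> \<in> cube d"
      by (simp add: \<epsilon>_def cube_def)
    ultimately show "s \<in> box_set H d ` cube d"
      by blast
  qed
qed

lemma inj_on_box_set:
  assumes H: "box_family d n H"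
  shows "inj_on (box_set H d) (cube d)"
proof (rule inj_onI)
  fix \<epsilon> \<epsilon>' assume \<epsilon>: "\<epsilon> \<in> cube d" "\<epsilon>' \<in> cube d" and eq: "box_set H d \<epsilon> = box_set H d \<epsilon>'"
  have "\<epsilon> i = \<epsilon>' i" if "i < d" for i
    using box_set_Int[OF H that, of \<epsilon>] box_set_Int[OF H that, of \<epsilon>'] eq box_elem_inj[OF H that that]
    by auto
  then show "\<epsilon> = \<epsilon>'"
    using \<epsilon> by (auto simp: cube_def PiE_def extensional_def fun_eq_iff)
qed

lemma card_box: "box_family d n H \<Longrightarrow> card (box d n H) = 2 ^ d"
  by (simp add: box_eq_image_box_set card_image inj_on_box_set card_cube)

lemma Xarr_box_set:
  assumes H: "box_family d n H"
  shows "Xarr d V G \<xi> (box_set H d \<epsilon>) = indicator (curlyG d V G) (vertex d (box_sample H d \<xi>) \<epsilon>)"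
proof -
  have "(\<lambda>j\<in>{..<d}. \<xi> (sorted_list_of_set (box_set H d \<epsilon>) ! j)) = vertex d (box_sample H d \<xi>) \<epsilon>"
    unfolding sorted_list_of_box_set[OF H] vertex_def box_sample_def by (rule restrict_ext) simp
  then show ?thesis
    by (simp add: Xarr_def)
qed

lemma real_card_filter_eq_sum:
  "finite A \<Longrightarrow> real (card {x \<in> A. P x}) = (\<Sum>x\<in>A. of_bool (P x))"
  by (simp add: sum.inter_filter[symmetric] of_bool_def)

lemma prod_indicator_eq_of_bool:
  "finite A \<Longrightarrow> (\<Prod>x\<in>A. indicator S (g x) :: real) = of_bool (\<forall>x\<in>A. g x \<in> S)"
  by (auto simp: indicator_def prod_zero_iff)

lemma box_support_subset: "box_family d n H \<Longrightarrow> box_support H d \<subseteq> {1..n}"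
  using box_elem_range by (auto simp: box_support_def)

lemma card_box_support:
  assumes H: "box_family d n H"
  shows "card (box_support H d) = 2 * d"
proof -
  have "inj_on (\<lambda>(i, b). box_elem H i b) ({..<d} \<times> UNIV)"
    using box_elem_inj[OF H] by (auto simp: inj_on_def)
  then show ?thesis
    by (simp add: box_support_def card_image card_cartesian_product)
qed

lemma bij_betw_box_sample:
  assumes H: "box_family d n H"
  shows "bij_betw (\<lambda>\<xi>. (box_sample H d \<xi>, restrict \<xi> ({1..n} - box_support H d)))
           ({1..n} \<rightarrow>\<^sub>E V) (Omega d V \<times> (({1..n} - box_support H d) \<rightarrow>\<^sub>E V))"
proof -
  let ?C = "box_support H d"
  let ?pos = "\<lambda>(i, b). box_elem H i b"
  let ?idx = "the_inv_into ({..<d} \<times> UNIV) ?pos"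
  have idx: "?idx (box_elem H i b) = (i, b)" if "i < d" for i b
    using box_elem_inj[OF H] that by (intro the_inv_into_f_eq) (auto simp: inj_on_def)
  have C: "box_elem H i b \<in> ?C" if "i < d" for i b
    using that by (auto simp: box_support_def)
  have C_cases: "\<exists>i b. i < d \<and> k = box_elem H i b" if "k \<in> ?C" for k
    using that by (auto simp: box_support_def)
  let ?glue = "\<lambda>(w, \<eta>) k. if k \<in> ?C then case_prod w (?idx k) else \<eta> k"
  show ?thesis
  proof (rule bij_betw_byWitness[where f' = ?glue])
    show "\<forall>\<xi>\<in>{1..n} \<rightarrow>\<^sub>E V. ?glue (box_sample H d \<xi>, restrict \<xi> ({1..n} - ?C)) = \<xi>"
      using C_cases by (fastforce simp: fun_eq_iff idx box_sample_def PiE_def extensional_def)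
    show "\<forall>p\<in>Omega d V \<times> (({1..n} - ?C) \<rightarrow>\<^sub>E V).
            (box_sample H d (?glue p), restrict (?glue p) ({1..n} - ?C)) = p"
      using C by (fastforce simp: fun_eq_iff idx box_sample_def Omega_def PiE_def extensional_def)
    show "(\<lambda>\<xi>. (box_sample H d \<xi>, restrict \<xi> ({1..n} - ?C))) ` ({1..n} \<rightarrow>\<^sub>E V)
        \<subseteq> Omega d V \<times> (({1..n} - ?C) \<rightarrow>\<^sub>E V)"
      using box_elem_range[OF H] by (fastforce simp: box_sample_def Omega_def)
    have "?glue (w, \<eta>) \<in> {1..n} \<rightarrow>\<^sub>E V" if w: "w \<in> Omega d V" and \<eta>: "\<eta> \<in> ({1..n} - ?C) \<rightarrow>\<^sub>E V" for w \<eta>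
    proof (rule PiE_I)
      fix k assume k: "k \<in> {1..n}"
      show "?glue (w, \<eta>) k \<in> V"
      proof (cases "k \<in> ?C")
        case True
        then obtain i b where "i < d" "k = box_elem H i b"
          using C_cases by blast
        then show ?thesis
          using w True by (auto simp: idx Omega_def)
      qed (use k \<eta> in auto)
    next
      fix k assume "k \<notin> {1..n}"
      then show "?glue (w, \<eta>) k = undefined"
        using \<eta> box_support_subset[OF H] by auto
    qed
    then show "?glue ` (Omega d V \<times> (({1..n} - ?C) \<rightarrow>\<^sub>E V)) \<subseteq> {1..n} \<rightarrow>\<^sub>E V"
      by auto
  qed
qed

lemma prob_box_sample:
  assumes H: "box_family d n H" and V: "finite V" "V \<noteq> {}" and n: "2 * d \<le> n"
  shows "prob_xi n V (\<lambda>\<xi>. P (box_sample H d \<xi>))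
       = real (card {w \<in> Omega d V. P w}) / real (card V) ^ (2 * d)"
proof -
  let ?S = "{1..n} \<rightarrow>\<^sub>E V" and ?R = "({1..n} - box_support H d) \<rightarrow>\<^sub>E V"
  let ?F = "\<lambda>\<xi>. (box_sample H d \<xi>, restrict \<xi> ({1..n} - box_support H d))"
  note bij = bij_betw_box_sample[OF H, of V]
  have "?F ` {\<xi> \<in> ?S. P (box_sample H d \<xi>)} = {p \<in> ?F ` ?S. P (fst p)}"
    by auto
  also have "\<dots> = {w \<in> Omega d V. P w} \<times> ?R"
    using bij_betw_imp_surj_on[OF bij] by auto
  finally have "bij_betw ?F {\<xi> \<in> ?S. P (box_sample H d \<xi>)} ({w \<in> Omega d V. P w} \<times> ?R)"
    by (intro bij_betw_subset[OF bij]) auto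
  then have "card {\<xi> \<in> ?S. P (box_sample H d \<xi>)} = card {w \<in> Omega d V. P w} * card V ^ (n - 2 * d)"
    using card_box_support[OF H] box_support_subset[OF H]
    by (simp add: bij_betw_same_card card_cartesian_product card_PiE card_Diff_subset finite_subset)
  moreover have "real (card V) ^ n = real (card V) ^ (2 * d) * real (card V) ^ (n - 2 * d)"
    using n by (simp flip: power_add)
  moreover have "{\<xi> \<in> ?S. P (box_sample H d \<xi>)} = ?S \<inter> {\<xi>. P (box_sample H d \<xi>)}"
    by auto
  ultimately show ?thesis
    using V by (simp add: prob_xi_def measure_pmf_of_set PiE_eq_empty_iff finite_PiE card_PiE card_gt_0_iff)
qed

lemma prob_box_all_one:
  assumes H: "box_family d n H" and V: "finite V" "V \<noteq> {}" and d: "0 < d" and n: "2 * d \<le> n"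
  shows "prob_xi n V (\<lambda>\<xi>. \<forall>s\<in>box d n H. Xarr d V G \<xi> s = 1)
       = box_norm d V (indicator (curlyG d V G)) ^ 2 ^ d"
proof -
  let ?P = "\<lambda>w. \<forall>\<epsilon>\<in>cube d. vertex d w \<epsilon> \<in> curlyG d V G"
  have "(\<forall>s\<in>box d n H. Xarr d V G \<xi> s = 1) \<longleftrightarrow> ?P (box_sample H d \<xi>)" for \<xi>
    by (simp add: box_eq_image_box_set[OF H] Xarr_box_set[OF H] indicator_def)
  then have "prob_xi n V (\<lambda>\<xi>. \<forall>s\<in>box d n H. Xarr d V G \<xi> s = 1)
      = real (card {w \<in> Omega d V. ?P w}) / real (card V) ^ (2 * d)"
    using prob_box_sample[OF H V n, of ?P] by simp
  also have "real (card {w \<in> Omega d V. ?P w}) = gowers_sum d V (\<lambda>_. indicator (curlyG d V G))"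
    unfolding gowers_sum_def
    by (simp add: real_card_filter_eq_sum[OF finite_Omega[OF V(1)]] prod_indicator_eq_of_bool[OF finite_cube])
  finally show ?thesis
    by (simp add: box_norm_pow[OF d])
qed

lemma prob_Xarr_one:
  assumes H: "box_family d n H" and V: "finite V" "V \<noteq> {}" and n: "2 * d \<le> n"
    and s: "s \<in> box d n H"
  shows "prob_xi n V (\<lambda>\<xi>. Xarr d V G \<xi> s = 1) = avg d V (indicator (curlyG d V G))"
proof -
  obtain \<epsilon> where \<epsilon>: "\<epsilon> \<in> cube d" and s: "s = box_set H d \<epsilon>"
    using s box_eq_image_box_set[OF H] by auto
  have "prob_xi n V (\<lambda>\<xi>. Xarr d V G \<xi> s = 1)
      = real (card {w \<in> Omega d V. vertex d w \<epsilon> \<in> curlyG d V G}) / real (card V) ^ (2 * d)"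
    using prob_box_sample[OF H V n, of "\<lambda>w. vertex d w \<epsilon> \<in> curlyG d V G"]
    by (simp add: s Xarr_box_set[OF H] indicator_def)
  also have "real (card {w \<in> Omega d V. vertex d w \<epsilon> \<in> curlyG d V G})
      = (\<Sum>w\<in>Omega d V. indicator (curlyG d V G) (vertex d w \<epsilon>))"
    by (simp add: real_card_filter_eq_sum[OF finite_Omega[OF V(1)]] indicator_def)
  also have "\<dots> = real (card V) ^ d * (\<Sum>v\<in>tuples d V. indicator (curlyG d V G) v)"
    by (rule sum_Omega_vertex[OF V(1) \<epsilon>])
  finally show ?thesis
    using V by (simp add: avg_def power_add mult_2 card_gt_0_iff)
qed

lemma box_independent_iff:
  assumes V: "finite V" "V \<noteq> {}" and d: "0 < d" and n: "2 * d \<le> n"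
  shows "box_independent d V G n \<theta> \<longleftrightarrow>
    box_norm d V (indicator (curlyG d V G)) ^ 2 ^ d \<le> avg d V (indicator (curlyG d V G)) ^ 2 ^ d + \<theta>"
proof -
  have box_probs: "prob_xi n V (\<lambda>\<xi>. \<forall>s\<in>box d n H. Xarr d V G \<xi> s = 1)
      = box_norm d V (indicator (curlyG d V G)) ^ 2 ^ d"
    "(\<Prod>s\<in>box d n H. prob_xi n V (\<lambda>\<xi>. Xarr d V G \<xi> s = 1)) = avg d V (indicator (curlyG d V G)) ^ 2 ^ d"
    if H: "box_family d n H" for H
    using prob_box_all_one[OF H V d n] prob_Xarr_one[OF H V n] card_box[OF H] by simp_all
  have H\<^sub>0: "box_family d n (\<lambda>i. {2 * i + 1, 2 * i + 2})"
    using n by (auto simp: box_family_def)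
  show ?thesis
  proof
    assume "box_independent d V G n \<theta>"
    from this[unfolded box_independent_def, rule_format, OF H\<^sub>0]
    show "box_norm d V (indicator (curlyG d V G)) ^ 2 ^ d \<le> avg d V (indicator (curlyG d V G)) ^ 2 ^ d + \<theta>"
      by (simp only: box_probs[OF H\<^sub>0])
  qed (simp add: box_independent_def box_probs)
qed

theorem proposition8p2:
  fixes d :: nat and V :: "'a set" and G :: "'a set set" and \<rho> \<theta> :: real
  assumes "d \<ge> 2" and "finite V" and "card V \<ge> d"
    and "uniform_hypergraph d V G"
    and "\<rho> > 0" and "\<theta> > 0"
  shows "(box_uniform d V G \<rho> \<longrightarrow>
            (\<forall>n\<ge>2*d. box_independent d V G n (2 ^ d * \<rho>)))
       \<and> ((\<exists>n\<ge>2*d. box_independent d V G n \<theta>) \<longleftrightarrow>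
            (\<forall>n\<ge>2*d. box_independent d V G n \<theta>))
       \<and> ((\<exists>n\<ge>2*d. box_independent d V G n \<theta>) \<longrightarrow>
            box_uniform d V G (12 * \<theta> powr (1 / 8 ^ d)))"
proof -
  let ?f = "indicator (curlyG d V G) :: (nat \<Rightarrow> 'a) \<Rightarrow> real"
  have V: "finite V" "V \<noteq> {}" and d: "0 < d"
    using assms(1-3) by auto
  have f: "\<And>x. 0 \<le> ?f x" "\<And>x. ?f x \<le> 1"
    by (auto simp: indicator_def)
  define gap where "gap t \<longleftrightarrow> box_norm d V ?f ^ 2 ^ d \<le> avg d V ?f ^ 2 ^ d + t" for t
  have "box_independent d V G n t \<longleftrightarrow> gap t" if "2 * d \<le> n" for n t
    unfolding gap_def by (rule box_independent_iff[OF V d that])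
  then have "(\<exists>n\<ge>2*d. box_independent d V G n t) \<longleftrightarrow> gap t"
    and "(\<forall>n\<ge>2*d. box_independent d V G n t) \<longleftrightarrow> gap t" for t
    by blast+
  moreover have "box_uniform d V G \<rho> \<Longrightarrow> gap (2 ^ d * \<rho>)"
    unfolding box_uniform_def gap_def by (rule box_norm_gap_le[OF V d f])
  moreover have "gap \<theta> \<Longrightarrow> box_uniform d V G (12 * \<theta> powr (1 / 8 ^ d))"
    unfolding box_uniform_def gap_def by (rule box_norm_centered_le[OF V d f \<open>\<theta> > 0\<close>])
  ultimately show ?thesis
    by blast
qed

end
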